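(* Every Petri net and every VASS, viewed as an ordered functional transition system, is cover-flattable: for every initial state $x_0$, $(\mathfrak X,x_0)$ is cover-flattable.
   Context: A VASS of dimension $k$ has a finite set $Q$ of control states and finitely many transitions, each given by $q,q'\in Q$ and $\vec a,\vec b\in\mathbb N^k$ and acting as the partial map $f(q,\vec x)=(q',\vec x+\vec b-\vec a)$, defined on states of control state $q$ with $\vec x\ge\vec a$. The state space $Q\times\mathbb N^k$ is ordered by $(q,\vec x)\le(q',\vec y)$ iff $q=q'$ and $\vec x\le\vec y$ componentwise. A Petri net on $k$ places is the case of a single control state (state space $\mathbb N^k$). Ordered functional transition system: partial order plus finite set of partial monotonic maps (upward-closed domain, monotone on it), with $x\to f(x)$. $Cover(x)=\downarrow Post^*(\downarrow x)$, $Post^*$ the reachability set. Flat: there are finitely many words $w_1,\dots,w_k$ over the set of transition maps such that every fireable sequence of transitions (from the initial state considered) lies in $w_1^*\cdots w_k^*$. A morphism $\varphi:\mathfrak X_1\to\mathfrak X$ maps states to states and transition maps to transition maps such that $s'=f_1(s)$ implies $\varphi(s)\in\operatorname{dom}\varphi(f_1)$ and $\varphi(s')=\varphi(f_1)(\varphi(s))$. A monotonic flattening of $\mathfrak X$ is $(\mathfrak X_1,\varphi)$ with $\mathfrak X_1$ a flat ordered functional transition system and $\varphi$ a morphism monotone on states. $(\mathfrak X,x_0)$ is cover-flattable iff there are a monotonic flattening $(\mathfrak X_1,\varphi)$ of $\mathfrak X$ and a state $x_1$ of $\mathfrak X_1$ with $\varphi(x_1)=x_0$ and $Cover_{\mathfrak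 X}(x_0)=\downarrow\varphi\langle Cover_{\mathfrak X_1}(x_1)\rangle$. *)

theory Defs
  imports Main
begin

definition partial_monotone :: "('s \<Rightarrow> 's \<Rightarrow> bool) \<Rightarrow> ('s \<Rightarrow> 's option) \<Rightarrow> bool" where
  "partial_monotone le f \<longleftrightarrow>
     (\<forall>x y. le x y \<and> f x \<noteq> None \<longrightarrow> f y \<noteq> None \<and> le (the (f x)) (the (f y)))"

definition ofts :: "('s \<Rightarrow> 's \<Rightarrow> bool) \<Rightarrow> ('s \<Rightarrow> 's option) set \<Rightarrow> bool" where
  "ofts le F \<longleftrightarrow> reflp le \<and> transp le \<and> antisymp le \<and> finite F \<and>
     (\<forall>f\<in>F. partial_monotone le f)"

fun fire :: "('s \<Rightarrow> 's option) list \<Rightarrow> 's \<Rightarrow> 's option" where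
  "fire [] x = Some x"
| "fire (f # w) x = Option.bind (f x) (fire w)"

definition post_star :: "('s \<Rightarrow> 's option) set \<Rightarrow> 's set \<Rightarrow> 's set" where
  "post_star F S = {y. \<exists>x\<in>S. \<exists>w\<in>lists F. fire w x = Some y}"

definition down :: "('s \<Rightarrow> 's \<Rightarrow> bool) \<Rightarrow> 's set \<Rightarrow> 's set" where
  "down le S = {y. \<exists>x\<in>S. le y x}"

definition cover :: "('s \<Rightarrow> 's \<Rightarrow> bool) \<Rightarrow> ('s \<Rightarrow> 's option) set \<Rightarrow> 's \<Rightarrow> 's set" where
  "cover le F x = down le (post_star F (down le {x}))"

definition in_flat_lang :: "'a list list \<Rightarrow> 'a list \<Rightarrow> bool" where
  "in_flat_lang ws w \<longleftrightarrow>
     (\<exists>ns. length ns = length ws \<and>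
           w = concat (map (\<lambda>(wi, n). concat (replicate n wi)) (zip ws ns)))"

definition flat :: "('s \<Rightarrow> 's option) set \<Rightarrow> 's \<Rightarrow> bool" where
  "flat F x \<longleftrightarrow> (\<exists>ws. set ws \<subseteq> lists F \<and>
     (\<forall>w\<in>lists F. fire w x \<noteq> None \<longrightarrow> in_flat_lang ws w))"

definition ofts_morphism ::
  "('s1 \<Rightarrow> 's1 option) set \<Rightarrow> ('s \<Rightarrow> 's option) set \<Rightarrow> ('s1 \<Rightarrow> 's)
   \<Rightarrow> (('s1 \<Rightarrow> 's1 option) \<Rightarrow> ('s \<Rightarrow> 's option)) \<Rightarrow> bool" where
  "ofts_morphism F1 F phis phit \<longleftrightarrow>
     (\<forall>f1\<in>F1. phit f1 \<in> F) \<and>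
     (\<forall>f1\<in>F1. \<forall>s s'. f1 s = Some s' \<longrightarrow> phit f1 (phis s) = Some (phis s'))"

text \<open>Cover-flattability. The flat system's state type is fixed to \<open>nat\<close>.\<close>
definition cover_flattable :: "('s \<Rightarrow> 's \<Rightarrow> bool) \<Rightarrow> ('s \<Rightarrow> 's option) set \<Rightarrow> 's \<Rightarrow> bool" where
  "cover_flattable le F x0 \<longleftrightarrow>
     (\<exists>(le1 :: nat \<Rightarrow> nat \<Rightarrow> bool) F1 phis phit x1.
        ofts le1 F1 \<and> flat F1 x1 \<and>
        ofts_morphism F1 F phis phit \<and>
        (\<forall>s t. le1 s t \<longrightarrow> le (phis s) (phis t)) \<and>
        phis x1 = x0 \<and>
        cover le F x0 = down le (phis ` cover le1 F1 x1))"

text \<open>A VASS transition \<open>(q, a, b, q')\<close>; control states of finite type \<open>'q\<close>,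
  counters indexed by finite type \<open>'k\<close> (dimension \<open>CARD('k)\<close>).\<close>
definition vass_le :: "('q \<times> ('k \<Rightarrow> nat)) \<Rightarrow> ('q \<times> ('k \<Rightarrow> nat)) \<Rightarrow> bool" where
  "vass_le s t \<longleftrightarrow> fst s = fst t \<and> (\<forall>i. snd s i \<le> snd t i)"

definition vass_map :: "('q \<times> ('k \<Rightarrow> nat) \<times> ('k \<Rightarrow> nat) \<times> 'q)
    \<Rightarrow> ('q \<times> ('k \<Rightarrow> nat)) \<Rightarrow> ('q \<times> ('k \<Rightarrow> nat)) option" where
  "vass_map tr s = (case tr of (q, a, b, q') \<Rightarrow>
     if fst s = q \<and> (\<forall>i. a i \<le> snd s i)
     then Some (q', \<lambda>i. snd s i + b i - a i) else None)"

definition pn_le :: "('k \<Rightarrow> nat) \<Rightarrow> ('k \<Rightarrow> nat) \<Rightarrow> bool" where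
  "pn_le x y \<longleftrightarrow> (\<forall>i. x i \<le> y i)"

definition pn_map :: "(('k \<Rightarrow> nat) \<times> ('k \<Rightarrow> nat)) \<Rightarrow> ('k \<Rightarrow> nat) \<Rightarrow> ('k \<Rightarrow> nat) option" where
  "pn_map tr x = (case tr of (a, b) \<Rightarrow>
     if (\<forall>i. a i \<le> x i) then Some (\<lambda>i. x i + b i - a i) else None)"

end

theory Submission
  imports Defs "HOL-Library.Countable_Set" "HOL-Library.Extended_Nat"
begin

text \<open>It suffices to find a bounded language \<open>u\<^sub>1\<^sup>* \<dots> u\<^sub>k\<^sup>*\<close> such that every
  reachable configuration is dominated by one reached along a word of that language: the firable
  prefixes of these words, coded as natural numbers and ordered by equality, form a flat system
  that maps onto the original one.

  For a VASS such a language comes from the Karp--Miller construction. Call an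
  \<open>\<omega>\<close>-configuration flat-approximable if runs along a bounded language reach configurations
  that exceed its finite counters and are arbitrarily large on its \<open>\<omega>\<close>-counters. This
  property survives steps and the acceleration of a loop that increases the configuration, since
  the loop can be pumped. Dickson's lemma and Koenig's lemma then give finitely many
  flat-approximable \<open>\<omega>\<close>-configurations covering the reachability set, and the bounded
  languages of these finitely many configurations concatenate to one. A Petri net is a VASS with a
  single control state.\<close>

section \<open>Flat languages\<close>

lemma fire_Nil_eq_Some [simp]: "fire [] = Some"
  by (rule ext) simp

lemma fire_append: "fire (v @ w) x = Option.bind (fire v x) (fire w)"
  by (induction v arbitrary: x) (auto split: Option.bind_split)

lemma in_flat_lang_Nil [simp]: "in_flat_lang [] w \<longleftrightarrow> w = []"
  by (simp add: in_flat_lang_def)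

lemma in_flat_lang_Cons:
  "in_flat_lang (u # ws) w \<longleftrightarrow> (\<exists>n v. w = concat (replicate n u) @ v \<and> in_flat_lang ws v)"
proof
  assume "in_flat_lang (u # ws) w"
  then show "\<exists>n v. w = concat (replicate n u) @ v \<and> in_flat_lang ws v"
    unfolding in_flat_lang_def by (metis (no_types, lifting) Suc_length_conv case_prod_conv
        concat.simps(2) list.simps(9) zip_Cons_Cons)
next
  assume "\<exists>n v. w = concat (replicate n u) @ v \<and> in_flat_lang ws v"
  then obtain n ns where "length ns = length ws"
    "w = concat (replicate n u) @ concat (map (\<lambda>(wi, n). concat (replicate n wi)) (zip ws ns))"
    unfolding in_flat_lang_def by blast
  then show "in_flat_lang (u # ws) w"
    unfolding in_flat_lang_def by (intro exI[of _ "n # ns"]) auto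
qed

lemma in_flat_lang_empty_word: "in_flat_lang ws []"
  by (induction ws) (auto simp: in_flat_lang_Cons intro: exI[of _ 0])

lemma in_flat_lang_append:
  "in_flat_lang ws1 w1 \<Longrightarrow> in_flat_lang ws2 w2 \<Longrightarrow> in_flat_lang (ws1 @ ws2) (w1 @ w2)"
proof (induction ws1 arbitrary: w1)
  case (Cons u ws1)
  then obtain n v where "w1 = concat (replicate n u) @ v" "in_flat_lang ws1 v"
    by (auto simp: in_flat_lang_Cons)
  with Cons.IH[of v] Cons.prems show ?case
    by (auto simp: in_flat_lang_Cons)
qed simp

lemma in_flat_lang_snoc:
  "in_flat_lang ws w \<Longrightarrow> in_flat_lang (ws @ [u]) (w @ concat (replicate n u))"
  using in_flat_lang_append[of ws w "[u]" "concat (replicate n u)"]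
  by (auto simp: in_flat_lang_Cons)

lemma in_flat_lang_concat: "in_flat_lang ws w \<Longrightarrow> ws \<in> set wss \<Longrightarrow> in_flat_lang (concat wss) w"
  by (metis append.left_neutral append.right_neutral concat.simps(2) concat_append
      in_flat_lang_append in_flat_lang_empty_word split_list)

lemma in_flat_lang_lists: "in_flat_lang ws w \<Longrightarrow> set ws \<subseteq> lists A \<Longrightarrow> w \<in> lists A"
proof (induction ws arbitrary: w)
  case (Cons u ws)
  then obtain n v where "w = concat (replicate n u) @ v" "in_flat_lang ws v"
    by (auto simp: in_flat_lang_Cons)
  with Cons show ?case by auto
qed simp

lemma in_flat_lang_map: "in_flat_lang ws w \<Longrightarrow> in_flat_lang (map (map h) ws) (map h w)"
proof (induction ws arbitrary: w)
  case (Cons u ws)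
  then obtain n v where "w = concat (replicate n u) @ v" "in_flat_lang ws v"
    by (auto simp: in_flat_lang_Cons)
  with Cons.IH[of v] show ?case
    by (auto simp: in_flat_lang_Cons map_concat intro!: exI[of _ n])
qed simp

definition letters :: "'a list \<Rightarrow> 'a list list" where
  "letters u = map (\<lambda>a. [a]) u"

definition expand :: "'a list list \<Rightarrow> 'a list list" where
  "expand ws = concat (map (\<lambda>u. u # letters u) ws)"

lemma expand_lists: "set ws \<subseteq> lists A \<Longrightarrow> set (expand ws) \<subseteq> lists A"
  by (auto simp: expand_def letters_def)

lemma in_flat_lang_letters_prefix: "in_flat_lang (letters (p @ r)) p"
  by (induction p) (auto simp: letters_def in_flat_lang_empty_word in_flat_lang_Cons
      intro!: exI[of _ 1])

lemma prefix_of_power: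
  "concat (replicate n u) = p @ r \<Longrightarrow> \<exists>j q s. p = concat (replicate j u) @ q \<and> u = q @ s"
proof (induction n arbitrary: p)
  case 0 then show ?case by (auto intro!: exI[of _ 0])
next
  case (Suc n)
  then have "u @ concat (replicate n u) = p @ r" by simp
  then consider us where "u = p @ us"
    | us where "p = u @ us" "us @ r = concat (replicate n u)"
    by (metis append_eq_append_conv2)
  then show ?case
  proof cases
    case 1 then show ?thesis by (auto intro!: exI[of _ 0])
  next
    case 2
    with Suc.IH[of us] obtain j q s where "us = concat (replicate j u) @ q" "u = q @ s" by metis
    with 2 show ?thesis by (auto intro!: exI[of _ "Suc j"])
  qed
qed

lemma in_flat_lang_expand_prefix: "in_flat_lang ws (p @ r) \<Longrightarrow> in_flat_lang (expand ws) p"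
proof (induction ws arbitrary: p r)
  case Nil then show ?case by (simp add: expand_def)
next
  case (Cons u ws)
  have expand_Cons: "expand (u # ws) = u # letters u @ expand ws"
    by (simp add: expand_def)
  from Cons.prems obtain n v where nv: "p @ r = concat (replicate n u) @ v" "in_flat_lang ws v"
    by (auto simp: in_flat_lang_Cons)
  then consider us where "concat (replicate n u) = p @ us"
    | us where "p = concat (replicate n u) @ us" "us @ r = v"
    by (metis append_eq_append_conv2)
  then show ?case
  proof cases
    case 1
    then obtain j q s where p: "p = concat (replicate j u) @ q" and u: "u = q @ s"
      using prefix_of_power by blast
    have "in_flat_lang (letters u @ expand ws) (q @ [])"
      unfolding u by (rule in_flat_lang_append[OF in_flat_lang_letters_prefix in_flat_lang_empty_word])
    with p show ?thesis
      unfolding expand_Cons in_flat_lang_Cons by (intro exI[of _ j] exI[of _ q]) simp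
  next
    case 2
    then have "in_flat_lang (letters u @ expand ws) ([] @ us)"
      using Cons.IH nv(2) by (intro in_flat_lang_append[OF in_flat_lang_empty_word]) blast
    with 2 show ?thesis
      unfolding expand_Cons in_flat_lang_Cons by (intro exI[of _ n] exI[of _ us]) simp
  qed
qed

section \<open>Flat domination implies cover-flattability\<close>

definition flat_dominated :: "('s \<Rightarrow> 's \<Rightarrow> bool) \<Rightarrow> ('l \<Rightarrow> 's \<Rightarrow> 's option) \<Rightarrow> 'l set \<Rightarrow> 's \<Rightarrow> bool" where
  "flat_dominated le m L x0 \<longleftrightarrow> (\<exists>ws. set ws \<subseteq> lists L \<and>
     (\<forall>w\<in>lists L. \<forall>y. fire (map m w) x0 = Some y \<longrightarrow>
        (\<exists>w' y'. in_flat_lang ws w' \<and> fire (map m w') x0 = Some y' \<and> le y y')))"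

lemma fire_mono:
  assumes "\<forall>l\<in>L. partial_monotone le (m l)"
  shows "w \<in> lists L \<Longrightarrow> le x y \<Longrightarrow> fire (map m w) x = Some x' \<Longrightarrow>
    \<exists>y'. fire (map m w) y = Some y' \<and> le x' y'"
proof (induction w arbitrary: x y)
  case (Cons l w)
  then obtain x1 where "m l x = Some x1" "fire (map m w) x1 = Some x'"
    by (cases "m l x") auto
  moreover obtain y1 where "m l y = Some y1" "le x1 y1"
    using assms Cons.prems \<open>m l x = Some x1\<close> unfolding partial_monotone_def
    by (metis Cons_in_lists_iff option.distinct(1) option.exhaust_sel option.sel)
  ultimately show ?case
    using Cons.IH[of x1 y1] Cons.prems by auto
qed simp

lemma post_star_image:
  "post_star (m ` L) S = {y. \<exists>x\<in>S. \<exists>w\<in>lists L. fire (map m w) x = Some y}"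
  by (auto simp: post_star_def lists_image)

lemma cover_eq_down_reach:
  assumes "reflp le" "transp le" "\<forall>l\<in>L. partial_monotone le (m l)" "W \<subseteq> lists L"
    and dominated: "\<And>w y. w \<in> lists L \<Longrightarrow> fire (map m w) x0 = Some y \<Longrightarrow>
      \<exists>w'\<in>W. \<exists>y'. fire (map m w') x0 = Some y' \<and> le y y'"
  shows "cover le (m ` L) x0 = down le {y. \<exists>w\<in>W. fire (map m w) x0 = Some y}"
proof
  show "cover le (m ` L) x0 \<subseteq> down le {y. \<exists>w\<in>W. fire (map m w) x0 = Some y}"
  proof
    fix z assume "z \<in> cover le (m ` L) x0"
    then obtain x w y where "le z y" "le x x0" "w \<in> lists L" "fire (map m w) x = Some y"
      unfolding cover_def down_def post_star_image by blast
    moreover from this obtain y' where "fire (map m w) x0 = Some y'" "le y y'"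
      using fire_mono[OF assms(3)] by blast
    moreover from this obtain w' y'' where "w' \<in> W" "fire (map m w') x0 = Some y''" "le y' y''"
      using dominated \<open>w \<in> lists L\<close> by blast
    ultimately show "z \<in> down le {y. \<exists>w\<in>W. fire (map m w) x0 = Some y}"
      using \<open>transp le\<close> unfolding down_def by (blast dest: transpD)
  qed
next
  show "down le {y. \<exists>w\<in>W. fire (map m w) x0 = Some y} \<subseteq> cover le (m ` L) x0"
    using reflpD[OF \<open>reflp le\<close>, of x0] \<open>W \<subseteq> lists L\<close>
    unfolding cover_def down_def post_star_image by blast
qed

locale run_tree =
  fixes m :: "'l \<Rightarrow> 's \<Rightarrow> 's option" and L :: "'l set" and x0 :: 's and W :: "'l list set"
  assumes finite_labels: "finite L"
    and words_lists: "W \<subseteq> lists L"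
    and words_fire: "w \<in> W \<Longrightarrow> fire (map m w) x0 \<noteq> None"
    and Nil_word: "[] \<in> W"
    and words_prefix_closed: "u @ v \<in> W \<Longrightarrow> u \<in> W"
begin

definition code :: "'l list \<Rightarrow> nat" where
  "code = to_nat_on W"

definition extend :: "'l \<Rightarrow> nat \<Rightarrow> nat option" where
  "extend l n = (if n \<in> code ` W \<and> from_nat_into W n @ [l] \<in> W
     then Some (code (from_nat_into W n @ [l])) else None)"

definition state :: "nat \<Rightarrow> 's" where
  "state n = the (fire (map m (from_nat_into W n)) x0)"

definition label :: "(nat \<Rightarrow> nat option) \<Rightarrow> 's \<Rightarrow> 's option" where
  "label f = m (SOME l. l \<in> L \<and> f = extend l)"

lemma countable_words: "countable W"
  using countable_subset[OF words_lists] finite_labels by (simp add: countable_finite)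

lemma from_nat_into_code [simp]: "w \<in> W \<Longrightarrow> from_nat_into W (code w) = w"
  using countable_words by (simp add: code_def)

lemma extend_code:
  "u \<in> W \<Longrightarrow> extend l (code u) = (if u @ [l] \<in> W then Some (code (u @ [l])) else None)"
  by (auto simp: extend_def)

lemma fire_extend_code: "u @ w \<in> W \<Longrightarrow> fire (map extend w) (code u) = Some (code (u @ w))"
proof (induction w arbitrary: u)
  case (Cons l w)
  then have "u @ [l] \<in> W" "u \<in> W"
    using words_prefix_closed[of "u @ [l]" w] words_prefix_closed[of u "l # w"] by auto
  with Cons.IH[of "u @ [l]"] Cons.prems show ?case by (simp add: extend_code)
qed simp

lemma fire_extend_codeD:
  "u \<in> W \<Longrightarrow> fire (map extend w) (code u) = Some n \<Longrightarrow> u @ w \<in> W \<and> n = code (u @ w)"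
proof (induction w arbitrary: u)
  case (Cons l w)
  then have "u @ [l] \<in> W" "fire (map extend w) (code (u @ [l])) = Some n"
    by (auto simp: extend_code split: if_splits)
  with Cons.IH[of "u @ [l]"] show ?case by simp
qed simp

lemma cover_extend: "cover (=) (extend ` L) (code []) = code ` W"
proof -
  have "post_star (extend ` L) {code []} = code ` W"
  proof (intro equalityI subsetI)
    fix n assume "n \<in> post_star (extend ` L) {code []}"
    then obtain w where "fire (map extend w) (code []) = Some n"
      unfolding post_star_image by blast
    then show "n \<in> code ` W"
      using fire_extend_codeD[OF Nil_word] by (metis append.left_neutral image_eqI)
  next
    fix n assume "n \<in> code ` W"
    then obtain w where "w \<in> W" "n = code w" by blast
    then show "n \<in> post_star (extend ` L) {code []}"
      using fire_extend_code[of "[]" w] words_lists unfolding post_star_image by auto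
  qed
  then show ?thesis
    by (simp add: cover_def down_def)
qed

lemma state_code: "w \<in> W \<Longrightarrow> fire (map m w) x0 = Some (state (code w))"
  using words_fire by (auto simp: state_def)

lemma ofts_extend: "ofts (=) (extend ` L)"
  using finite_labels
  by (auto simp: ofts_def partial_monotone_def reflp_def transp_def antisymp_def)

lemma flat_extend:
  assumes "set ws \<subseteq> lists L" "\<And>w. w \<in> W \<Longrightarrow> in_flat_lang ws w"
  shows "flat (extend ` L) (code [])"
  unfolding flat_def
proof (intro exI[of _ "map (map extend) ws"] conjI ballI impI)
  show "set (map (map extend) ws) \<subseteq> lists (extend ` L)"
    using assms(1) by fastforce
next
  fix v assume "v \<in> lists (extend ` L)" "fire v (code []) \<noteq> None"
  then obtain w n where v: "v = map extend w" and "fire (map extend w) (code []) = Some n"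
    unfolding lists_image by blast
  then have "w \<in> W"
    using fire_extend_codeD[OF Nil_word] by (metis append_Nil)
  then show "in_flat_lang (map (map extend) ws) v"
    unfolding v by (rule in_flat_lang_map[OF assms(2)])
qed

lemma morphism_label: "ofts_morphism (extend ` L) (m ` L) state label"
  unfolding ofts_morphism_def
proof (intro conjI ballI allI impI)
  fix f assume "f \<in> extend ` L"
  then have "\<exists>l. l \<in> L \<and> f = extend l" by blast
  then obtain l where l: "l \<in> L" "f = extend l" "label f = m l"
    unfolding label_def by (metis (mono_tags, lifting) someI_ex)
  then show "label f \<in> m ` L" by simp
  fix s s' assume "f s = Some s'"
  then obtain u where u: "u \<in> W" "s = code u" "u @ [l] \<in> W" "s' = code (u @ [l])"
    using l by (auto simp: extend_def split: if_splits)
  then show "label f (state s) = Some (state s')"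
    using state_code[OF u(1)] state_code[OF u(3)] l(3) by (simp add: fire_append)
qed

lemma state_image_cover:
  "state ` cover (=) (extend ` L) (code []) = {y. \<exists>w\<in>W. fire (map m w) x0 = Some y}"
  unfolding cover_extend using state_code by force

lemma cover_flattableI:
  assumes "set ws \<subseteq> lists L" "\<And>w. w \<in> W \<Longrightarrow> in_flat_lang ws w" "reflp le"
    and "cover le (m ` L) x0 = down le {y. \<exists>w\<in>W. fire (map m w) x0 = Some y}"
  shows "cover_flattable le (m ` L) x0"
proof -
  have "state (code []) = x0"
    using state_code[OF Nil_word] by simp
  moreover have "\<forall>s t. s = t \<longrightarrow> le (state s) (state t)"
    using \<open>reflp le\<close> by (simp add: reflpD)
  ultimately show ?thesis
    unfolding cover_flattable_def state_image_cover[symmetric] assms(4)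
    using ofts_extend flat_extend[OF assms(1,2)] morphism_label by blast
qed

end

lemma flat_dominated_imp_cover_flattable:
  assumes "finite L" "reflp le" "transp le"
    and "\<forall>l\<in>L. partial_monotone le (m l)"
    and "flat_dominated le m L x0"
  shows "cover_flattable le (m ` L) x0"
proof -
  obtain ws where ws: "set ws \<subseteq> lists L"
    and dominated: "\<And>w y. w \<in> lists L \<Longrightarrow> fire (map m w) x0 = Some y \<Longrightarrow>
      \<exists>w' y'. in_flat_lang ws w' \<and> fire (map m w') x0 = Some y' \<and> le y y'"
    using assms(5) by (auto simp: flat_dominated_def)
  define W where "W = {w \<in> lists L. fire (map m w) x0 \<noteq> None \<and> (\<exists>r. in_flat_lang ws (w @ r))}"
  interpret run_tree m L x0 W
    using \<open>finite L\<close> by unfold_locales (auto simp: W_def fire_append split: Option.bind_splits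
        intro: in_flat_lang_empty_word)
  have "in_flat_lang (expand ws) w" if "w \<in> W" for w
    using that in_flat_lang_expand_prefix by (auto simp: W_def)
  moreover have "\<exists>w'\<in>W. \<exists>y'. fire (map m w') x0 = Some y' \<and> le y y'"
    if "w \<in> lists L" "fire (map m w) x0 = Some y" for w y
  proof -
    from dominated[OF that] obtain w' y' where
      "in_flat_lang ws w'" "fire (map m w') x0 = Some y'" "le y y'"
      by blast
    moreover have "w' \<in> W"
      using calculation in_flat_lang_lists[OF _ ws] by (auto simp: W_def intro: exI[of _ "[]"])
    ultimately show ?thesis by blast
  qed
  then have "cover le (m ` L) x0 = down le {y. \<exists>w\<in>W. fire (map m w) x0 = Some y}"
    using cover_eq_down_reach[OF assms(2-4) words_lists] by blast
  ultimately show ?thesis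
    using cover_flattableI[OF expand_lists[OF ws]] \<open>reflp le\<close> by blast
qed

section \<open>Dickson's lemma\<close>

lemma monotone_infinite_subset:
  fixes g :: "nat \<Rightarrow> 'a::wellorder"
  assumes "infinite Z"
  shows "\<exists>Y\<subseteq>Z. infinite Y \<and> (\<forall>i\<in>Y. \<forall>j\<in>Y. i < j \<longrightarrow> g i \<le> g j)"
proof -
  define A where "A = {i \<in> Z. \<forall>j\<in>Z. i < j \<longrightarrow> g i \<le> g j}"
  have "infinite A"
  proof
    assume "finite A"
    then obtain k where "A \<subseteq> {..<k}"
      using finite_nat_iff_bounded by blast
    define Z' where "Z' = {i \<in> Z. k \<le> i}"
    have "Z - {..<k} \<subseteq> Z'"
      by (auto simp: Z'_def)
    then have "infinite Z'"
      using \<open>infinite Z\<close> finite_subset by fastforce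
    then obtain i0 where "i0 \<in> Z'" by (metis finite.emptyI ex_in_conv)
    define v where "v = (LEAST v. v \<in> g ` Z')"
    obtain i where i: "i \<in> Z'" "g i = v"
      using LeastI[of "\<lambda>v. v \<in> g ` Z'" "g i0"] \<open>i0 \<in> Z'\<close> by (auto simp: v_def)
    then have "i \<notin> A"
      using \<open>A \<subseteq> {..<k}\<close> by (auto simp: Z'_def)
    then obtain j where j: "j \<in> Z" "i < j" "g j < g i"
      using i(1) by (auto simp: A_def Z'_def not_le)
    then have "j \<in> Z'"
      using i(1) by (auto simp: Z'_def)
    then have "v \<le> g j"
      unfolding v_def by (blast intro: Least_le)
    with i j show False by simp
  qed
  then show ?thesis
    by (intro exI[of _ A]) (auto simp: A_def)
qed

lemma pointwise_monotone_infinite_subset: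
  fixes s :: "nat \<Rightarrow> 'k \<Rightarrow> 'a::wellorder"
  assumes "finite K" "infinite Z"
  shows "\<exists>Y\<subseteq>Z. infinite Y \<and> (\<forall>i\<in>Y. \<forall>j\<in>Y. i < j \<longrightarrow> (\<forall>c\<in>K. s i c \<le> s j c))"
  using assms(1)
proof induction
  case empty then show ?case using assms(2) by blast
next
  case (insert c K)
  then obtain Y where Y: "Y \<subseteq> Z" "infinite Y" "\<forall>i\<in>Y. \<forall>j\<in>Y. i < j \<longrightarrow> (\<forall>c\<in>K. s i c \<le> s j c)"
    by blast
  moreover obtain Y' where "Y' \<subseteq> Y" "infinite Y'" "\<forall>i\<in>Y'. \<forall>j\<in>Y'. i < j \<longrightarrow> s i c \<le> s j c"
    using monotone_infinite_subset[OF Y(2), of "\<lambda>i. s i c"] by blast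
  ultimately show ?case
    by (intro exI[of _ Y']) blast
qed

lemma dickson:
  fixes s :: "nat \<Rightarrow> 'q::finite \<times> ('k::finite \<Rightarrow> 'a::wellorder)"
  shows "\<exists>i j. i < j \<and> fst (s i) = fst (s j) \<and> snd (s i) \<le> snd (s j)"
proof -
  obtain q where q: "infinite {i. fst (s i) = q}"
    using inf_img_fin_dom'[of "fst \<circ> s" UNIV] by (auto simp: vimage_def)
  obtain Y where Y: "Y \<subseteq> {i. fst (s i) = q}" "infinite Y"
    "\<forall>i\<in>Y. \<forall>j\<in>Y. i < j \<longrightarrow> (\<forall>c. snd (s i) c \<le> snd (s j) c)"
    using pointwise_monotone_infinite_subset[OF finite_UNIV q, of "\<lambda>i. snd (s i)"] by auto
  obtain i j where "i \<in> Y" "j \<in> Y" "i < j"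
    using Y(2) by (metis infinite_nat_iff_unbounded)
  with Y show ?thesis
    unfolding le_fun_def by blast
qed

section \<open>Finite covers by acceleration\<close>

lemma rtranclp_avoiding_start: "R\<^sup>*\<^sup>* a b \<Longrightarrow> (\<lambda>x y. R x y \<and> y \<noteq> a)\<^sup>*\<^sup>* a b"
proof (induction rule: rtranclp_induct)
  case (step y z)
  then show ?case
    by (cases "z = a") (auto intro: rtranclp.rtrancl_into_rtrancl)
qed simp

definition bad_extension :: "('a \<Rightarrow> 'a \<Rightarrow> bool) \<Rightarrow> ('a set \<times> 'a set) set" where
  "bad_extension le = {(insert p S, S) | S p. \<forall>s\<in>S. \<not> le s p}"

lemma wf_bad_extension:
  assumes good: "\<And>s :: nat \<Rightarrow> 'a. \<exists>i j. i < j \<and> le (s i) (s j)"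
  shows "wf (bad_extension le)"
  unfolding wf_iff_no_infinite_down_chain
proof
  assume "\<exists>f. \<forall>i. (f (Suc i), f i) \<in> bad_extension le"
  then obtain f where f: "\<And>i. (f (Suc i), f i) \<in> bad_extension le"
    by blast
  have "\<exists>p. f (Suc i) = insert p (f i) \<and> (\<forall>s\<in>f i. \<not> le s p)" for i
    using f[of i] by (auto simp: bad_extension_def)
  then obtain p where step: "\<And>i. f (Suc i) = insert (p i) (f i)" "\<And>i. \<forall>s\<in>f i. \<not> le s (p i)"
    by metis
  have "f i \<subseteq> f j" if "i \<le> j" for i j
    using that by (induction rule: dec_induct) (use step in auto)
  then have "\<not> le (p i) (p j)" if "i < j" for i j
    using step[of i] step[of j] that by (metis Suc_leI insertI1 subsetD)
  with good[of p] show False by blast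
qed

locale accelerable =
  fixes step :: "'a \<Rightarrow> 'a \<Rightarrow> bool" and le :: "'a \<Rightarrow> 'a \<Rightarrow> bool"
    and P :: "'a \<Rightarrow> bool" and rank :: "'a \<Rightarrow> nat"
  assumes finite_succ: "finite {y. step x y}"
    and good: "\<And>s :: nat \<Rightarrow> 'a. \<exists>i j. i < j \<and> le (s i) (s j)"
    and le_refl: "le x x"
    and le_trans: "le x y \<Longrightarrow> le y z \<Longrightarrow> le x z"
    and simulation: "le x y \<Longrightarrow> step x x' \<Longrightarrow> \<exists>y'. step y y' \<and> le x' y'"
    and P_step: "P x \<Longrightarrow> step x y \<Longrightarrow> P y"
    and rank_step: "step x y \<Longrightarrow> rank y = rank x"
    and accelerate: "P s \<Longrightarrow> step\<^sup>*\<^sup>* s p \<Longrightarrow> le s p \<Longrightarrow> s \<noteq> p \<Longrightarrow>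
      \<exists>f. P f \<and> le p f \<and> rank f < rank s"
begin

definition finitely_covered :: "'a \<Rightarrow> bool" where
  "finitely_covered x \<longleftrightarrow> (\<exists>E. finite E \<and> Ball E P \<and> (\<forall>g. step\<^sup>*\<^sup>* x g \<longrightarrow> (\<exists>h\<in>E. le g h)))"

lemma P_steps: "step\<^sup>*\<^sup>* x y \<Longrightarrow> P x \<Longrightarrow> P y"
  by (induction rule: rtranclp_induct) (auto intro: P_step)

lemma rank_steps: "step\<^sup>*\<^sup>* x y \<Longrightarrow> rank y = rank x"
  by (induction rule: rtranclp_induct) (auto dest: rank_step)

lemma simulation_steps: "step\<^sup>*\<^sup>* x x' \<Longrightarrow> le x y \<Longrightarrow> \<exists>y'. step\<^sup>*\<^sup>* y y' \<and> le x' y'"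
proof (induction rule: rtranclp_induct)
  case (step x' x'')
  then obtain y' where "step\<^sup>*\<^sup>* y y'" "le x' y'" by blast
  with simulation[OF _ step(2)] show ?case
    by (meson rtranclp.rtrancl_into_rtrancl)
qed blast

definition covered_avoiding :: "'a set \<Rightarrow> 'a \<Rightarrow> bool" where
  "covered_avoiding S x \<longleftrightarrow> (\<exists>E. finite E \<and> Ball E P \<and>
     (\<forall>g. (\<lambda>x y. step x y \<and> y \<notin> S)\<^sup>*\<^sup>* x g \<longrightarrow> (\<exists>h\<in>E. le g h)))"

lemma covered_avoiding_empty: "covered_avoiding {} x \<longleftrightarrow> finitely_covered x"
  by (simp add: covered_avoiding_def finitely_covered_def)

lemma covered_avoiding_if_finitely_covered: "finitely_covered x \<Longrightarrow> covered_avoiding S x"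
  unfolding covered_avoiding_def finitely_covered_def
  by (metis (mono_tags, lifting) mono_rtranclp)

lemma covered_avoiding_insert:
  assumes "covered_avoiding (insert x S) x"
  shows "covered_avoiding S x"
proof -
  have eq: "(\<lambda>y z. (step y z \<and> z \<notin> S) \<and> z \<noteq> x) = (\<lambda>y z. step y z \<and> z \<notin> insert x S)"
    by auto
  obtain E where "finite E" "Ball E P"
    and E: "\<forall>g. (\<lambda>y z. step y z \<and> z \<notin> insert x S)\<^sup>*\<^sup>* x g \<longrightarrow> (\<exists>h\<in>E. le g h)"
    using assms unfolding covered_avoiding_def by blast
  moreover have "\<exists>h\<in>E. le g h" if "(\<lambda>y z. step y z \<and> z \<notin> S)\<^sup>*\<^sup>* x g" for g
    using E rtranclp_avoiding_start[OF that, unfolded eq] by blast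
  ultimately show ?thesis
    unfolding covered_avoiding_def by blast
qed

lemma covered_avoiding_succs:
  assumes "P x" "\<And>y. step x y \<Longrightarrow> y \<notin> S \<Longrightarrow> covered_avoiding S y"
  shows "covered_avoiding S x"
proof -
  let ?succs = "{y. step x y \<and> y \<notin> S}"
  obtain E where E: "\<And>y. y \<in> ?succs \<Longrightarrow> finite (E y) \<and> Ball (E y) P \<and>
      (\<forall>g. (\<lambda>x y. step x y \<and> y \<notin> S)\<^sup>*\<^sup>* y g \<longrightarrow> (\<exists>h\<in>E y. le g h))"
    using assms(2) unfolding covered_avoiding_def by (metis mem_Collect_eq)
  have "finite ?succs"
    using finite_succ[of x] by (rule rev_finite_subset) auto
  with assms(1) show ?thesis
    unfolding covered_avoiding_def
  proof (intro exI[of _ "insert x (\<Union>y\<in>?succs. E y)"] conjI allI impI)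
    fix g assume "(\<lambda>x y. step x y \<and> y \<notin> S)\<^sup>*\<^sup>* x g"
    then show "\<exists>h\<in>insert x (\<Union>y\<in>?succs. E y). le g h"
      by (cases rule: converse_rtranclpE) (use le_refl E in auto)
  qed (use E in auto)
qed

text \<open>\<open>S\<close> is the branch leading to \<open>c\<close> in the tree of runs from \<open>e\<close>, pruned at nodes that
  dominate a node on their branch; by \<open>wf_bad_extension\<close> the pruned tree is finite. Pruned
  nodes are covered by \<open>growth\<close> instead.\<close>
lemma covered_avoiding_branch:
  assumes growth: "\<And>s p. step\<^sup>*\<^sup>* e s \<Longrightarrow> step\<^sup>*\<^sup>* s p \<Longrightarrow> le s p \<Longrightarrow> s \<noteq> p \<Longrightarrow>
      finitely_covered p"
    and "P e"
  shows "c \<in> S \<Longrightarrow> \<forall>s\<in>S. step\<^sup>*\<^sup>* e s \<and> step\<^sup>*\<^sup>* s c \<Longrightarrow> covered_avoiding S c"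
  using wf_bad_extension[of le, OF good]
proof (induction S arbitrary: c rule: wf_induct_rule)
  case (less S)
  show ?case
  proof (rule covered_avoiding_succs)
    show "P c"
      using less.prems P_steps[OF _ \<open>P e\<close>] by blast
  next
    fix p assume "step c p" "p \<notin> S"
    then have branch: "\<forall>s\<in>insert p S. step\<^sup>*\<^sup>* e s \<and> step\<^sup>*\<^sup>* s p"
      using less.prems by (auto intro: rtranclp.rtrancl_into_rtrancl)
    show "covered_avoiding S p"
    proof (cases "\<exists>s\<in>S. le s p")
      case True
      with branch \<open>p \<notin> S\<close> show ?thesis
        by (metis covered_avoiding_if_finitely_covered growth insertCI)
    next
      case False
      with less.IH[of "insert p S" p] branch show ?thesis
        by (auto simp: bad_extension_def intro: covered_avoiding_insert)
    qed
  qed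
qed

lemma finitely_covered_if_growth_covered:
  assumes "\<And>s p. step\<^sup>*\<^sup>* e s \<Longrightarrow> step\<^sup>*\<^sup>* s p \<Longrightarrow> le s p \<Longrightarrow> s \<noteq> p \<Longrightarrow>
      finitely_covered p"
    and "P e"
  shows "finitely_covered e"
  using covered_avoiding_branch[OF assms, where c = e and S = "{e}"]
  by (simp add: covered_avoiding_insert covered_avoiding_empty[symmetric])

theorem finitely_coveredI: "P e \<Longrightarrow> finitely_covered e"
proof (induction "rank e" arbitrary: e rule: less_induct)
  case less
  show ?case
  proof (rule finitely_covered_if_growth_covered[OF _ less.prems])
    fix s p assume "step\<^sup>*\<^sup>* e s" "step\<^sup>*\<^sup>* s p" "le s p" "s \<noteq> p"
    moreover have "P s" "rank s = rank e"
      using P_steps[OF \<open>step\<^sup>*\<^sup>* e s\<close> less.prems] rank_steps[OF \<open>step\<^sup>*\<^sup>* e s\<close>] by auto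
    ultimately obtain f where "P f" "le p f" "rank f < rank e"
      using accelerate by force
    then have "finitely_covered f"
      using less.hyps by blast
    then obtain E where E: "finite E" "Ball E P" "\<forall>g. step\<^sup>*\<^sup>* f g \<longrightarrow> (\<exists>h\<in>E. le g h)"
      unfolding finitely_covered_def by blast
    have "\<exists>h\<in>E. le g h" if "step\<^sup>*\<^sup>* p g" for g
      using simulation_steps[OF that \<open>le p f\<close>] E(3) le_trans by blast
    with E(1,2) show "finitely_covered p"
      unfolding finitely_covered_def by blast
  qed
qed

end

section \<open>\<open>\<omega>\<close>-configurations of a VASS\<close>

type_synonym ('q, 'k) vass_trans = "'q \<times> ('k \<Rightarrow> nat) \<times> ('k \<Rightarrow> nat) \<times> 'q"
type_synonym ('q, 'k) omega_conf = "'q \<times> ('k \<Rightarrow> enat)"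

definition omega_map :: "('q, 'k) vass_trans \<Rightarrow> ('q, 'k) omega_conf \<Rightarrow> ('q, 'k) omega_conf option" where
  "omega_map t e = (case t of (q, a, b, q') \<Rightarrow>
     if fst e = q \<and> (\<forall>i. enat (a i) \<le> snd e i)
     then Some (q', \<lambda>i. snd e i + enat (b i) - enat (a i)) else None)"

definition omega_le :: "('q, 'k) omega_conf \<Rightarrow> ('q, 'k) omega_conf \<Rightarrow> bool" where
  "omega_le e f \<longleftrightarrow> fst e = fst f \<and> (\<forall>i. snd e i \<le> snd f i)"

definition omega_step :: "('q, 'k) vass_trans set \<Rightarrow> ('q, 'k) omega_conf \<Rightarrow> ('q, 'k) omega_conf \<Rightarrow> bool" where
  "omega_step T e f \<longleftrightarrow> (\<exists>t\<in>T. omega_map t e = Some f)"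

definition omega_of :: "'q \<times> ('k \<Rightarrow> nat) \<Rightarrow> ('q, 'k) omega_conf" where
  "omega_of y = (fst y, \<lambda>i. enat (snd y i))"

definition accelerate :: "('q, 'k) omega_conf \<Rightarrow> ('q, 'k) omega_conf \<Rightarrow> ('q, 'k) omega_conf" where
  "accelerate e e' = (fst e', \<lambda>i. if snd e i < snd e' i then \<infinity> else snd e' i)"

definition finite_coords :: "('q, 'k) omega_conf \<Rightarrow> nat" where
  "finite_coords e = card {i. snd e i \<noteq> \<infinity>}"

definition dominates :: "nat \<Rightarrow> 'q \<times> ('k \<Rightarrow> nat) \<Rightarrow> ('q, 'k) omega_conf \<Rightarrow> bool" where
  "dominates N y e \<longleftrightarrow> fst y = fst e \<and>
     (\<forall>i. (snd e i = \<infinity> \<longrightarrow> N \<le> snd y i) \<and> (\<forall>m. snd e i = enat m \<longrightarrow> m \<le> snd y i))"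

definition flat_approximable ::
    "('q, 'k) vass_trans set \<Rightarrow> 'q \<times> ('k \<Rightarrow> nat) \<Rightarrow> ('q, 'k) omega_conf \<Rightarrow> bool" where
  "flat_approximable T x0 e \<longleftrightarrow> (\<exists>ws. set ws \<subseteq> lists T \<and>
     (\<forall>N. \<exists>w y. in_flat_lang ws w \<and> fire (map vass_map w) x0 = Some y \<and> dominates N y e))"

definition trans_cost :: "('q, 'k::finite) vass_trans \<Rightarrow> nat" where
  "trans_cost t = (\<Sum>i\<in>UNIV. fst (snd t) i)"

definition word_cost :: "('q, 'k::finite) vass_trans list \<Rightarrow> nat" where
  "word_cost u = sum_list (map trans_cost u)"

lemma omega_map_omega_of: "omega_map t (omega_of y) = map_option omega_of (vass_map t y)"
  by (cases t) (auto simp: omega_map_def vass_map_def omega_of_def)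

lemma omega_map_SomeE:
  assumes "omega_map t e = Some e'"
  obtains q a b q' where "t = (q, a, b, q')" "fst e = q" "\<And>i. enat (a i) \<le> snd e i"
    "e' = (q', \<lambda>i. snd e i + enat (b i) - enat (a i))"
  using assms by (cases t) (auto simp: omega_map_def split: if_splits)

lemma omega_map_infinite_iff: "omega_map t e = Some e' \<Longrightarrow> snd e' i = \<infinity> \<longleftrightarrow> snd e i = \<infinity>"
  by (erule omega_map_SomeE) (cases "snd e i", auto)

lemma fire_omega_map_infinite_iff:
  "fire (map omega_map u) e = Some e' \<Longrightarrow> snd e' i = \<infinity> \<longleftrightarrow> snd e i = \<infinity>"
proof (induction u arbitrary: e)
  case (Cons t u)
  then obtain e1 where "omega_map t e = Some e1" "fire (map omega_map u) e1 = Some e'"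
    by (cases "omega_map t e") auto
  with Cons.IH omega_map_infinite_iff show ?case by metis
qed simp

lemma omega_map_mono:
  assumes "omega_le e f" "omega_map t e = Some e'"
  shows "\<exists>f'. omega_map t f = Some f' \<and> omega_le e' f'"
proof -
  obtain q a b q' where t: "t = (q, a, b, q')" "fst e = q" "\<And>i. enat (a i) \<le> snd e i"
    "e' = (q', \<lambda>i. snd e i + enat (b i) - enat (a i))"
    using assms(2) by (erule omega_map_SomeE)
  have le: "snd e i \<le> snd f i" for i
    using assms(1) by (simp add: omega_le_def)
  have "enat (a i) \<le> snd f i" for i
    using t(3)[of i] le[of i] by (rule order.trans)
  moreover have "snd e i + enat (b i) - enat (a i) \<le> snd f i + enat (b i) - enat (a i)" for i
    using le[of i] by (cases "snd e i"; cases "snd f i") auto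
  ultimately show ?thesis
    using t assms(1) by (auto simp: omega_map_def omega_le_def)
qed

lemma dominates_step:
  fixes t :: "('q, 'k::finite) vass_trans"
  assumes "omega_map t e = Some e'" "dominates (N + trans_cost t) y e"
  shows "\<exists>y'. vass_map t y = Some y' \<and> dominates N y' e' \<and>
    (\<forall>i m m'. snd e i = enat m \<longrightarrow> snd e' i = enat m' \<longrightarrow> snd y' i + m = snd y i + m')"
proof -
  obtain q a b q' where t: "t = (q, a, b, q')" "fst e = q" "\<And>i. enat (a i) \<le> snd e i"
    "e' = (q', \<lambda>i. snd e i + enat (b i) - enat (a i))"
    using assms(1) by (erule omega_map_SomeE)
  have a_le_cost: "a i \<le> trans_cost t" for i
    unfolding t(1) trans_cost_def by (simp add: member_le_sum)
  have y: "fst y = fst e" "\<And>i. snd e i = \<infinity> \<Longrightarrow> N + trans_cost t \<le> snd y i"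
     "\<And>i m. snd e i = enat m \<Longrightarrow> m \<le> snd y i"
    using assms(2) by (auto simp: dominates_def)
  have enabled: "a i \<le> snd y i" for i
  proof (cases "snd e i")
    case (enat m) then show ?thesis using t(3)[of i] y(3)[of i m] by simp
  next
    case infinity then show ?thesis using y(2)[of i] a_le_cost[of i] by simp
  qed
  define y' where "y' = (q', \<lambda>i. snd y i + b i - a i)"
  have "vass_map t y = Some y'"
    using enabled y(1) t by (simp add: vass_map_def y'_def)
  moreover have "dominates N y' e'"
    unfolding dominates_def
  proof (intro conjI allI impI)
    fix i assume "snd e' i = \<infinity>"
    then have "snd e i = \<infinity>"
      using omega_map_infinite_iff[OF assms(1)] by simp
    then show "N \<le> snd y' i"
      using y(2)[of i] a_le_cost[of i] by (simp add: y'_def)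
  next
    fix i m assume "snd e' i = enat m"
    moreover obtain p where "snd e i = enat p"
      using calculation omega_map_infinite_iff[OF assms(1), of i] by (cases "snd e i") auto
    ultimately show "m \<le> snd y' i"
      using t(3)[of i] y(3)[of i p] by (simp add: t(4) y'_def)
  qed (simp add: y'_def t(4))
  moreover have "snd y' i + m = snd y i + m'" if "snd e i = enat m" "snd e' i = enat m'" for i m m'
  proof -
    have "m' = m + b i - a i" "a i \<le> m" "m \<le> snd y i"
      using that t(3)[of i] y(3)[of i m] by (auto simp: t(4))
    then show ?thesis by (simp add: y'_def)
  qed
  ultimately show ?thesis by blast
qed

lemma dominates_word:
  fixes u :: "('q, 'k::finite) vass_trans list"
  assumes "fire (map omega_map u) e = Some e'" "dominates (N + word_cost u) y e"
  shows "\<exists>y'. fire (map vass_map u) y = Some y' \<and> dominates N y' e' \<and>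
    (\<forall>i m m'. snd e i = enat m \<longrightarrow> snd e' i = enat m' \<longrightarrow> snd y' i + m = snd y i + m')"
  using assms
proof (induction u arbitrary: e y)
  case Nil then show ?case by (simp add: word_cost_def dominates_def)
next
  case (Cons t u)
  from Cons.prems obtain e1 where e1: "omega_map t e = Some e1" "fire (map omega_map u) e1 = Some e'"
    by (cases "omega_map t e") auto
  have "dominates ((N + word_cost u) + trans_cost t) y e"
    using Cons.prems(2) by (simp add: word_cost_def ac_simps)
  from dominates_step[OF e1(1) this] obtain y1 where y1: "vass_map t y = Some y1"
    "dominates (N + word_cost u) y1 e1"
    "\<forall>i m m'. snd e i = enat m \<longrightarrow> snd e1 i = enat m' \<longrightarrow> snd y1 i + m = snd y i + m'"
    by blast
  from Cons.IH[OF e1(2) y1(2)] obtain y' where y': "fire (map vass_map u) y1 = Some y'"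
    "dominates N y' e'"
    "\<forall>i m m'. snd e1 i = enat m \<longrightarrow> snd e' i = enat m' \<longrightarrow> snd y' i + m = snd y1 i + m'"
    by blast
  have "snd y' i + m = snd y i + m'" if mm': "snd e i = enat m" "snd e' i = enat m'" for i m m'
  proof -
    obtain p where "snd e1 i = enat p"
      using omega_map_infinite_iff[OF e1(1), of i] mm'(1) by (cases "snd e1 i") auto
    then show ?thesis
      using y1(3) y'(3) mm' by fastforce
  qed
  then show ?case
    using y1(1) y' by auto
qed

lemma dominates_pump:
  fixes u :: "('q, 'k::finite) vass_trans list"
  assumes u: "fire (map omega_map u) e = Some e'" and "omega_le e e'"
  shows "dominates (N + n * word_cost u) y e \<Longrightarrow>
    \<exists>y'. fire (map vass_map (concat (replicate n u))) y = Some y' \<and> dominates N y' e \<and>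
      (\<forall>i m m'. snd e i = enat m \<longrightarrow> snd e' i = enat m' \<longrightarrow> snd y' i = snd y i + n * (m' - m))"
proof (induction n arbitrary: y)
  case 0 then show ?case by (simp add: dominates_def)
next
  case (Suc n)
  have "dominates ((N + n * word_cost u) + word_cost u) y e"
    using Suc.prems by (simp add: ac_simps)
  from dominates_word[OF u this] obtain y1 where y1: "fire (map vass_map u) y = Some y1"
    "dominates (N + n * word_cost u) y1 e'"
    "\<forall>i m m'. snd e i = enat m \<longrightarrow> snd e' i = enat m' \<longrightarrow> snd y1 i + m = snd y i + m'"
    by blast
  have gain: "m \<le> m'" if "snd e i = enat m" "snd e' i = enat m'" for i m m'
    using \<open>omega_le e e'\<close> that by (auto simp: omega_le_def elim!: allE[of _ i])
  have "dominates (N + n * word_cost u) y1 e"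
    unfolding dominates_def
  proof (intro conjI allI impI)
    show "fst y1 = fst e"
      using y1(2) \<open>omega_le e e'\<close> by (simp add: dominates_def omega_le_def)
  next
    fix i assume "snd e i = \<infinity>"
    then show "N + n * word_cost u \<le> snd y1 i"
      using y1(2) fire_omega_map_infinite_iff[OF u] by (simp add: dominates_def)
  next
    fix i m assume m: "snd e i = enat m"
    then obtain m' where "snd e' i = enat m'"
      using fire_omega_map_infinite_iff[OF u, of i] by (cases "snd e' i") auto
    then show "m \<le> snd y1 i"
      using y1(2) gain[OF m] by (auto simp: dominates_def elim!: allE[of _ i])
  qed
  from Suc.IH[OF this] obtain y' where y': "fire (map vass_map (concat (replicate n u))) y1 = Some y'"
    "dominates N y' e"
    "\<forall>i m m'. snd e i = enat m \<longrightarrow> snd e' i = enat m' \<longrightarrow> snd y' i = snd y1 i + n * (m' - m)"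
    by blast
  have "snd y' i = snd y i + Suc n * (m' - m)" if "snd e i = enat m" "snd e' i = enat m'" for i m m'
    using y1(3) y'(3) that gain[OF that] by fastforce
  then show ?case
    using y1(1) y'(1,2) by (auto simp: fire_append)
qed

lemma dominates_accelerate:
  fixes u :: "('q, 'k::finite) vass_trans list"
  assumes u: "fire (map omega_map u) e = Some e'" and "omega_le e e'"
    and "dominates (N + N * word_cost u) y e"
  shows "\<exists>y'. fire (map vass_map (concat (replicate N u))) y = Some y' \<and>
    dominates N y' (accelerate e e')"
proof -
  obtain y' where y': "fire (map vass_map (concat (replicate N u))) y = Some y'" "dominates N y' e"
    "\<forall>i m m'. snd e i = enat m \<longrightarrow> snd e' i = enat m' \<longrightarrow> snd y' i = snd y i + N * (m' - m)"
    using dominates_pump[OF assms] by blast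
  have "dominates N y' (accelerate e e')"
    unfolding dominates_def
  proof (intro conjI allI impI)
    show "fst y' = fst (accelerate e e')"
      using y'(2) \<open>omega_le e e'\<close> by (simp add: dominates_def omega_le_def accelerate_def)
  next
    fix i assume "snd (accelerate e e') i = \<infinity>"
    then consider "snd e i < snd e' i" | "snd e i = \<infinity>"
      using \<open>omega_le e e'\<close> by (auto simp: accelerate_def omega_le_def split: if_splits)
    then show "N \<le> snd y' i"
    proof cases
      case 1
      then obtain m m' where "snd e i = enat m" "snd e' i = enat m'" "m < m'"
        using fire_omega_map_infinite_iff[OF u, of i] by (cases "snd e i"; cases "snd e' i") auto
      moreover have "N \<le> N * (m' - m)"
        using \<open>m < m'\<close> by (simp add: Suc_leI)
      ultimately show ?thesis
        using y'(3) by (auto intro: trans_le_add2)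
    next
      case 2
      then show ?thesis
        using y'(2) by (simp add: dominates_def)
    qed
  next
    fix i m assume "snd (accelerate e e') i = enat m"
    then have "snd e i = enat m"
      using \<open>omega_le e e'\<close> by (auto simp: accelerate_def omega_le_def split: if_splits
          elim!: allE[of _ i])
    then show "m \<le> snd y' i"
      using y'(2) by (simp add: dominates_def)
  qed
  with y'(1) show ?thesis by blast
qed

lemma flat_approximable_omega_of: "flat_approximable T x0 (omega_of x0)"
  unfolding flat_approximable_def
  by (intro exI[of _ "[]"] conjI allI exI[of _ "[]"] exI[of _ x0])
    (auto simp: dominates_def omega_of_def)

lemma flat_approximable_word:
  fixes T :: "('q, 'k::finite) vass_trans set"
  assumes "flat_approximable T x0 e" "u \<in> lists T" "fire (map omega_map u) e = Some e'"
  shows "flat_approximable T x0 e'"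
proof -
  obtain ws where ws: "set ws \<subseteq> lists T"
    "\<And>N. \<exists>w y. in_flat_lang ws w \<and> fire (map vass_map w) x0 = Some y \<and> dominates N y e"
    using assms(1) by (auto simp: flat_approximable_def)
  show ?thesis
    unfolding flat_approximable_def
  proof (intro exI[of _ "ws @ [u]"] conjI allI)
    show "set (ws @ [u]) \<subseteq> lists T"
      using ws(1) assms(2) by auto
  next
    fix N
    obtain w y where w: "in_flat_lang ws w" "fire (map vass_map w) x0 = Some y"
      "dominates (N + word_cost u) y e"
      using ws(2) by blast
    moreover obtain y' where "fire (map vass_map u) y = Some y'" "dominates N y' e'"
      using dominates_word[OF assms(3) w(3)] by blast
    ultimately show "\<exists>w y. in_flat_lang (ws @ [u]) w \<and> fire (map vass_map w) x0 = Some y \<and>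
        dominates N y e'"
      using in_flat_lang_snoc[OF w(1), of u 1]
      by (intro exI[of _ "w @ u"] exI[of _ y']) (auto simp: fire_append)
  qed
qed

lemma flat_approximable_accelerate:
  fixes T :: "('q, 'k::finite) vass_trans set"
  assumes "flat_approximable T x0 e" "u \<in> lists T" "fire (map omega_map u) e = Some e'"
    "omega_le e e'"
  shows "flat_approximable T x0 (accelerate e e')"
proof -
  obtain ws where ws: "set ws \<subseteq> lists T"
    "\<And>N. \<exists>w y. in_flat_lang ws w \<and> fire (map vass_map w) x0 = Some y \<and> dominates N y e"
    using assms(1) by (auto simp: flat_approximable_def)
  show ?thesis
    unfolding flat_approximable_def
  proof (intro exI[of _ "ws @ [u]"] conjI allI)
    show "set (ws @ [u]) \<subseteq> lists T"
      using ws(1) assms(2) by auto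
  next
    fix N
    obtain w y where w: "in_flat_lang ws w" "fire (map vass_map w) x0 = Some y"
      "dominates (N + N * word_cost u) y e"
      using ws(2) by blast
    moreover obtain y' where "fire (map vass_map (concat (replicate N u))) y = Some y'"
      "dominates N y' (accelerate e e')"
      using dominates_accelerate[OF assms(3,4) w(3)] by blast
    ultimately show "\<exists>w y. in_flat_lang (ws @ [u]) w \<and> fire (map vass_map w) x0 = Some y \<and>
        dominates N y (accelerate e e')"
      using in_flat_lang_snoc[OF w(1), of u N]
      by (intro exI[of _ "w @ concat (replicate N u)"] exI[of _ y']) (auto simp: fire_append)
  qed
qed

section \<open>The Karp--Miller cover of a VASS is flat\<close>

lemma omega_steps_word:
  "(omega_step T)\<^sup>*\<^sup>* e f \<Longrightarrow> \<exists>u\<in>lists T. fire (map omega_map u) e = Some f"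
proof (induction rule: rtranclp_induct)
  case base then show ?case by (intro bexI[of _ "[]"]) auto
next
  case (step g h)
  then obtain u where "u \<in> lists T" "fire (map omega_map u) e = Some g"
    by blast
  moreover obtain t where "t \<in> T" "omega_map t g = Some h"
    using \<open>omega_step T g h\<close> unfolding omega_step_def by blast
  ultimately show ?case
    by (intro bexI[of _ "u @ [t]"]) (auto simp: fire_append)
qed

lemma omega_steps_omega_of:
  "w \<in> lists T \<Longrightarrow> fire (map vass_map w) x = Some y \<Longrightarrow> (omega_step T)\<^sup>*\<^sup>* (omega_of x) (omega_of y)"
proof (induction w arbitrary: x)
  case (Cons t w)
  then obtain x1 where x1: "vass_map t x = Some x1" "fire (map vass_map w) x1 = Some y"
    by (cases "vass_map t x") auto
  then have "omega_step T (omega_of x) (omega_of x1)"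
    using Cons.prems(1) omega_map_omega_of[of t x] by (auto simp: omega_step_def)
  with Cons.IH[OF _ x1(2)] Cons.prems(1) show ?case
    by (auto intro: converse_rtranclp_into_rtranclp)
qed simp

lemma finite_coords_accelerate:
  fixes s p :: "('q, 'k::finite) omega_conf"
  assumes "omega_le s p" "s \<noteq> p" "{i. snd p i = \<infinity>} = {i. snd s i = \<infinity>}"
  shows "finite_coords (accelerate s p) < finite_coords s"
proof -
  obtain i where i: "snd s i < snd p i"
    using assms(1,2) by (auto simp: omega_le_def fun_eq_iff prod_eq_iff order.order_iff_strict)
  have "{i. snd (accelerate s p) i \<noteq> \<infinity>} \<subseteq> {i. snd s i \<noteq> \<infinity>}"
    using assms(3) by (auto simp: accelerate_def set_eq_iff simp del: not_infinity_eq)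
  moreover have "snd (accelerate s p) i = \<infinity>" "snd s i \<noteq> \<infinity>"
    using i by (simp add: accelerate_def, cases "snd s i", auto)
  ultimately have "{i. snd (accelerate s p) i \<noteq> \<infinity>} \<subset> {i. snd s i \<noteq> \<infinity>}"
    by blast
  then show ?thesis
    unfolding finite_coords_def by (simp add: psubset_card_mono)
qed

lemma accelerable_omega_step:
  fixes T :: "('q::finite, 'k::finite) vass_trans set"
  assumes "finite T"
  shows "accelerable (omega_step T) omega_le (flat_approximable T x0) finite_coords"
proof
  show "finite {y. omega_step T x y}" for x
  proof (rule finite_subset)
    show "{y. omega_step T x y} \<subseteq> (\<lambda>t. the (omega_map t x)) ` T"
      by (force simp: omega_step_def)
  qed (use assms in simp)
next
  show "\<exists>i j. i < j \<and> omega_le (s i) (s j)" for s :: "nat \<Rightarrow> ('q, 'k) omega_conf"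
    using dickson[of s] by (auto simp: omega_le_def le_fun_def)
next
  fix x y x' assume "omega_le x y" "omega_step T x x'"
  then obtain t where "t \<in> T" "omega_map t x = Some x'"
    by (auto simp: omega_step_def)
  with omega_map_mono[OF \<open>omega_le x y\<close>] show "\<exists>y'. omega_step T y y' \<and> omega_le x' y'"
    by (fastforce simp: omega_step_def)
next
  fix x y assume "flat_approximable T x0 x" "omega_step T x y"
  then obtain t where "t \<in> T" "omega_map t x = Some y"
    by (auto simp: omega_step_def)
  with flat_approximable_word[OF \<open>flat_approximable T x0 x\<close>, of "[t]"]
  show "flat_approximable T x0 y"
    by simp
next
  fix x y assume "omega_step T x y"
  then obtain t where "omega_map t x = Some y"
    by (auto simp: omega_step_def)
  then show "finite_coords y = finite_coords x"
    using omega_map_infinite_iff unfolding finite_coords_def by metis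
next
  fix s p assume s: "flat_approximable T x0 s" and "(omega_step T)\<^sup>*\<^sup>* s p"
    and sp: "omega_le s p" "s \<noteq> p"
  then obtain u where u: "u \<in> lists T" "fire (map omega_map u) s = Some p"
    using omega_steps_word by blast
  have "{i. snd p i = \<infinity>} = {i. snd s i = \<infinity>}"
    using fire_omega_map_infinite_iff[OF u(2)] by blast
  moreover have "omega_le p (accelerate s p)"
    by (auto simp: omega_le_def accelerate_def)
  ultimately show "\<exists>f. flat_approximable T x0 f \<and> omega_le p f \<and> finite_coords f < finite_coords s"
    using flat_approximable_accelerate[OF s u sp(1)] finite_coords_accelerate[OF sp] by blast
qed (auto simp: omega_le_def intro: order.trans)

lemma dominates_vass_le:
  fixes y :: "'q \<times> ('k::finite \<Rightarrow> nat)"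
  assumes "omega_le (omega_of y) h" "dominates (\<Sum>i\<in>UNIV. snd y i) y' h"
  shows "vass_le y y'"
  unfolding vass_le_def
proof (intro conjI allI)
  show "fst y = fst y'"
    using assms by (simp add: omega_le_def omega_of_def dominates_def)
next
  fix i
  show "snd y i \<le> snd y' i"
  proof (cases "snd h i")
    case (enat m)
    then show ?thesis
      using assms by (auto simp: omega_le_def omega_of_def dominates_def elim!: allE[of _ i])
  next
    case infinity
    then show ?thesis
      using assms(2) member_le_sum[of i UNIV "snd y"]
      by (auto simp: dominates_def elim!: allE[of _ i])
  qed
qed

lemma vass_flat_dominated:
  fixes T :: "('q::finite, 'k::finite) vass_trans set"
  assumes "finite T"
  shows "flat_dominated vass_le vass_map T x0"
proof -
  interpret accelerable "omega_step T" omega_le "flat_approximable T x0" finite_coords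
    by (rule accelerable_omega_step[OF assms])
  obtain E where E: "finite E" "Ball E (flat_approximable T x0)"
    "\<forall>g. (omega_step T)\<^sup>*\<^sup>* (omega_of x0) g \<longrightarrow> (\<exists>h\<in>E. omega_le g h)"
    using finitely_coveredI[OF flat_approximable_omega_of] unfolding finitely_covered_def by blast
  obtain W where W: "\<And>h. h \<in> E \<Longrightarrow> set (W h) \<subseteq> lists T"
    "\<And>h N. h \<in> E \<Longrightarrow> \<exists>w y. in_flat_lang (W h) w \<and> fire (map vass_map w) x0 = Some y \<and> dominates N y h"
    using E(2) unfolding flat_approximable_def by metis
  obtain hs where "set hs = E"
    using finite_list[OF E(1)] by blast
  show ?thesis
    unfolding flat_dominated_def
  proof (intro exI[of _ "concat (map W hs)"] conjI ballI allI impI)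
    show "set (concat (map W hs)) \<subseteq> lists T"
      using W(1) \<open>set hs = E\<close> by auto
  next
    fix w y assume "w \<in> lists T" "fire (map vass_map w) x0 = Some y"
    then obtain h where "h \<in> E" "omega_le (omega_of y) h"
      using omega_steps_omega_of E(3) by blast
    moreover obtain w' y' where "in_flat_lang (W h) w'" "fire (map vass_map w') x0 = Some y'"
      "dominates (\<Sum>i\<in>UNIV. snd y i) y' h"
      using W(2) \<open>h \<in> E\<close> by blast
    moreover have "in_flat_lang (concat (map W hs)) w'"
      using in_flat_lang_concat[of "W h" w' "map W hs"] \<open>set hs = E\<close> calculation by simp
    ultimately show "\<exists>w' y'. in_flat_lang (concat (map W hs)) w' \<and>
        fire (map vass_map w') x0 = Some y' \<and> vass_le y y'"
      using dominates_vass_le by blast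
  qed
qed

section \<open>Petri nets as VASS\<close>

definition vass_of_pn :: "('k \<Rightarrow> nat) \<times> ('k \<Rightarrow> nat) \<Rightarrow> (unit, 'k) vass_trans" where
  "vass_of_pn p = ((), fst p, snd p, ())"

definition pn_of_vass :: "(unit, 'k) vass_trans \<Rightarrow> ('k \<Rightarrow> nat) \<times> ('k \<Rightarrow> nat)" where
  "pn_of_vass t = (fst (snd t), fst (snd (snd t)))"

lemma pn_of_vass_of_pn [simp]: "pn_of_vass (vass_of_pn p) = p"
  by (simp add: pn_of_vass_def vass_of_pn_def)

lemma fire_vass_of_pn:
  "fire (map vass_map (map vass_of_pn w)) ((), x) = map_option (Pair ()) (fire (map pn_map w) x)"
proof (induction w arbitrary: x)
  case (Cons p w)
  have "vass_map (vass_of_pn p) ((), x) = map_option (Pair ()) (pn_map p x)"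
    by (cases p) (simp add: vass_map_def pn_map_def vass_of_pn_def)
  with Cons show ?case
    by (cases "pn_map p x") auto
qed simp

lemma pn_flat_dominated:
  fixes P :: "(('k::finite \<Rightarrow> nat) \<times> ('k \<Rightarrow> nat)) set"
  assumes "finite P"
  shows "flat_dominated pn_le pn_map P y0"
proof -
  obtain ws where ws: "set ws \<subseteq> lists (vass_of_pn ` P)"
    and dominated: "\<And>w y. w \<in> lists (vass_of_pn ` P) \<Longrightarrow> fire (map vass_map w) ((), y0) = Some y \<Longrightarrow>
      \<exists>w' y'. in_flat_lang ws w' \<and> fire (map vass_map w') ((), y0) = Some y' \<and> vass_le y y'"
    using vass_flat_dominated[of "vass_of_pn ` P" "((), y0)"] assms
    unfolding flat_dominated_def by auto
  have pn_of_vass_inverse: "map vass_of_pn (map pn_of_vass w) = w" if "w \<in> lists (vass_of_pn ` P)" for w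
    using that by (induction w) auto
  show ?thesis
    unfolding flat_dominated_def
  proof (intro exI[of _ "map (map pn_of_vass) ws"] conjI ballI allI impI)
    show "set (map (map pn_of_vass) ws) \<subseteq> lists P"
      using ws by (fastforce simp: lists_image)
  next
    fix w y assume "w \<in> lists P" "fire (map pn_map w) y0 = Some y"
    then have "map vass_of_pn w \<in> lists (vass_of_pn ` P)"
      "fire (map vass_map (map vass_of_pn w)) ((), y0) = Some ((), y)"
      by (auto simp: fire_vass_of_pn simp del: map_map)
    then obtain w' y' where w': "in_flat_lang ws w'" "fire (map vass_map w') ((), y0) = Some y'"
      "vass_le ((), y) y'"
      using dominated by blast
    then have "fire (map vass_map (map vass_of_pn (map pn_of_vass w'))) ((), y0) = Some y'"
      using pn_of_vass_inverse[OF in_flat_lang_lists[OF w'(1) ws]] by simp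
    then obtain y'' where "fire (map pn_map (map pn_of_vass w')) y0 = Some y''" "y' = ((), y'')"
      unfolding fire_vass_of_pn by auto
    with w' show "\<exists>w' y'. in_flat_lang (map (map pn_of_vass) ws) w' \<and>
        fire (map pn_map w') y0 = Some y' \<and> pn_le y y'"
      using in_flat_lang_map by (fastforce simp: vass_le_def pn_le_def)
  qed
qed

lemma reflp_vass_le: "reflp vass_le"
  by (simp add: reflp_def vass_le_def)

lemma transp_vass_le: "transp vass_le"
  by (auto simp: transp_def vass_le_def intro: order.trans)

lemma reflp_pn_le: "reflp pn_le"
  by (simp add: reflp_def pn_le_def)

lemma transp_pn_le: "transp pn_le"
  by (auto simp: transp_def pn_le_def intro: order.trans)

lemma vass_partial_monotone: "partial_monotone vass_le (vass_map t)"
  unfolding partial_monotone_def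
  by (cases t) (auto simp: vass_le_def vass_map_def intro: order.trans diff_le_mono)

lemma pn_partial_monotone: "partial_monotone pn_le (pn_map t)"
  unfolding partial_monotone_def
  by (cases t) (auto simp: pn_le_def pn_map_def intro: order.trans diff_le_mono)

theorem corollary5p27:
  fixes T :: "('q::finite \<times> ('k::finite \<Rightarrow> nat) \<times> ('k \<Rightarrow> nat) \<times> 'q) set"
    and x0 :: "'q \<times> ('k \<Rightarrow> nat)"
    and P :: "(('k \<Rightarrow> nat) \<times> ('k \<Rightarrow> nat)) set"
    and y0 :: "'k \<Rightarrow> nat"
  assumes "finite T" and "finite P"
  shows "cover_flattable vass_le (vass_map ` T) x0 \<and> cover_flattable pn_le (pn_map ` P) y0"
proof
  show "cover_flattable vass_le (vass_map ` T) x0"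
    using assms(1) reflp_vass_le transp_vass_le vass_partial_monotone
    by (intro flat_dominated_imp_cover_flattable vass_flat_dominated) auto
  show "cover_flattable pn_le (pn_map ` P) y0"
    using assms(2) reflp_pn_le transp_pn_le pn_partial_monotone
    by (intro flat_dominated_imp_cover_flattable pn_flat_dominated) auto
qed

end
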